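(* Let $C=\{C_n,\partial_n\}_{n\geq 0}$ be a chain complex of abelian groups (with $\partial_0=0$ and $C_{-1}=0$), and let $D=\{D_n\}_{n\ge 0}$ and $D'=\{D'_n\}_{n\ge 0}$ be graded subgroups of $C$ with $D'_n\subseteq D_n\subseteq C_n$ for all $n$. Then the inclusion $\mathrm{Inf}(D,C)\hookrightarrow \mathrm{Sup}(D,C)$ induces a chain map $$\iota:\ \mathrm{Inf}(D,C)/\mathrm{Inf}(D',C)\longrightarrow \mathrm{Sup}(D,C)/\mathrm{Sup}(D',C),$$ and $\iota$ induces an isomorphism $\iota_*: H_*\big(\mathrm{Inf}(D,C)/\mathrm{Inf}(D',C)\big)\xrightarrow{\cong} H_*\big(\mathrm{Sup}(D,C)/\mathrm{Sup}(D',C)\big)$ in every degree.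
   Context: For a chain complex $C$ and a graded subgroup $D$ of $C$ (with $D_{-1}=0$), the infimum chain complex $\mathrm{Inf}(D,C)$ is given by $\mathrm{Inf}_n(D,C)=D_n\cap \partial_n^{-1}(D_{n-1})$ (the largest sub-chain complex of $C$ contained in $D$), and the supremum chain complex $\mathrm{Sup}(D,C)$ is given by $\mathrm{Sup}_n(D,C)=D_n+\partial_{n+1}(D_{n+1})$ (the smallest sub-chain complex of $C$ containing $D$). If $D'\subseteq D$, then $\mathrm{Inf}(D',C)\subseteq\mathrm{Inf}(D,C)\subseteq \mathrm{Sup}(D,C)$ and $\mathrm{Inf}(D',C)\subseteq\mathrm{Sup}(D',C)\subseteq\mathrm{Sup}(D,C)$ are sub-chain complexes. *)

theory Defs
  imports "HOL-Algebra.Algebra"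
begin

text \<open>A chain complex of abelian groups, indexed by degrees n \<ge> 0.
  d n is the boundary map from degree Suc n to degree n (the paper's \<partial>_{n+1});
  the paper's \<partial>_0 = 0 into C_{-1} = 0 is implicit.\<close>
definition chain_complex ::
  "(nat \<Rightarrow> ('a, 'm) monoid_scheme) \<Rightarrow> (nat \<Rightarrow> 'a \<Rightarrow> 'a) \<Rightarrow> bool" where
  "chain_complex G d \<longleftrightarrow>
     (\<forall>n. comm_group (G n)) \<and>
     (\<forall>n. d n \<in> hom (G (Suc n)) (G n)) \<and>
     (\<forall>n x. x \<in> carrier (G (Suc (Suc n))) \<longrightarrow> d n (d (Suc n) x) = \<one>\<^bsub>G n\<^esub>)"

definition chain_map ::
  "(nat \<Rightarrow> ('a, 'm) monoid_scheme) \<Rightarrow> (nat \<Rightarrow> 'a \<Rightarrow> 'a) \<Rightarrow>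
   (nat \<Rightarrow> ('b, 'n) monoid_scheme) \<Rightarrow> (nat \<Rightarrow> 'b \<Rightarrow> 'b) \<Rightarrow> (nat \<Rightarrow> 'a \<Rightarrow> 'b) \<Rightarrow> bool" where
  "chain_map G d G' d' f \<longleftrightarrow>
     (\<forall>n. f n \<in> hom (G n) (G' n)) \<and>
     (\<forall>n x. x \<in> carrier (G (Suc n)) \<longrightarrow> f n (d n x) = d' n (f (Suc n) x))"

definition cycles ::
  "(nat \<Rightarrow> ('a, 'm) monoid_scheme) \<Rightarrow> (nat \<Rightarrow> 'a \<Rightarrow> 'a) \<Rightarrow> nat \<Rightarrow> 'a set" where
  "cycles G d n = (if n = 0 then carrier (G 0) else kernel (G n) (G (n - 1)) (d (n - 1)))"

definition boundaries ::
  "(nat \<Rightarrow> ('a, 'm) monoid_scheme) \<Rightarrow> (nat \<Rightarrow> 'a \<Rightarrow> 'a) \<Rightarrow> nat \<Rightarrow> 'a set" where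
  "boundaries G d n = d n ` carrier (G (Suc n))"

definition homology ::
  "(nat \<Rightarrow> ('a, 'm) monoid_scheme) \<Rightarrow> (nat \<Rightarrow> 'a \<Rightarrow> 'a) \<Rightarrow> nat \<Rightarrow> 'a set monoid" where
  "homology G d n = subgroup_generated (G n) (cycles G d n) Mod boundaries G d n"

definition hom_induced ::
  "(nat \<Rightarrow> ('b, 'n) monoid_scheme) \<Rightarrow> (nat \<Rightarrow> 'b \<Rightarrow> 'b) \<Rightarrow> (nat \<Rightarrow> 'a \<Rightarrow> 'b) \<Rightarrow> nat \<Rightarrow> 'a set \<Rightarrow> 'b set" where
  "hom_induced H e f n S = set_mult (H n) (boundaries H e n) (f n ` S)"

definition Inf_cx ::
  "(nat \<Rightarrow> ('a, 'm) monoid_scheme) \<Rightarrow> (nat \<Rightarrow> 'a \<Rightarrow> 'a) \<Rightarrow> (nat \<Rightarrow> 'a set) \<Rightarrow> nat \<Rightarrow> 'a set" where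
  "Inf_cx C d D n = (if n = 0 then D 0 else D n \<inter> (d (n - 1)) -` D (n - 1))"

definition Sup_cx ::
  "(nat \<Rightarrow> ('a, 'm) monoid_scheme) \<Rightarrow> (nat \<Rightarrow> 'a \<Rightarrow> 'a) \<Rightarrow> (nat \<Rightarrow> 'a set) \<Rightarrow> nat \<Rightarrow> 'a set" where
  "Sup_cx C d D n = D n <#>\<^bsub>C n\<^esub> (d n ` D (Suc n))"

definition quot_cx ::
  "(nat \<Rightarrow> ('a, 'm) monoid_scheme) \<Rightarrow> (nat \<Rightarrow> 'a set) \<Rightarrow> (nat \<Rightarrow> 'a set) \<Rightarrow> nat \<Rightarrow> 'a set monoid" where
  "quot_cx C A B n = subgroup_generated (C n) (A n) Mod B n"

definition quot_bd ::
  "(nat \<Rightarrow> ('a, 'm) monoid_scheme) \<Rightarrow> (nat \<Rightarrow> 'a \<Rightarrow> 'a) \<Rightarrow> (nat \<Rightarrow> 'a set) \<Rightarrow> nat \<Rightarrow> 'a set \<Rightarrow> 'a set" where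
  "quot_bd C d B n S = B n <#>\<^bsub>C n\<^esub> (d n ` S)"

end

theory Submission
  imports Defs
begin

(* The homology of a quotient A/B of sub-complexes is the group of relative cycles
   {a in A_n. d a in B_(n-1)} modulo B_n + d A_(n+1); for Sup(D)/Sup(D') this denominator is
   D'_n + d D_(n+1), because d d = 0.
   Injectivity: if a relative cycle of Inf(D)/Inf(D') is a = u + d w with u in D'_n and
   w in D_(n+1), then d w = a - u lies in D_n and d u = d a lies in D'_(n-1), so already
   w is in Inf(D)_(n+1) and u in Inf(D')_n.
   Surjectivity: for a relative cycle s = x + d y of Sup(D)/Sup(D') (x in D_n, y in D_(n+1))
   write d x = u + d v with u in D'_(n-1), v in D'_n; then t = x - v has d t = u in Inf(D')_(n-1),
   so t is a relative cycle of Inf(D)/Inf(D') and s = t + (v + d y). *)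

lemma (in group) rcos_eq_iff_mem:
  assumes "subgroup H G" "x \<in> carrier G" "y \<in> carrier G"
  shows "H #> x = H #> y \<longleftrightarrow> x \<in> H #> y"
  using assms repr_independence[of x H y] repr_independenceD[of H x y] by blast

lemma (in group) subgroup_set_mult_absorb:
  assumes "subgroup H G" "\<one> \<in> K" "K \<subseteq> H"
  shows "H <#> K = H"
proof
  show "H <#> K \<subseteq> H"
    using mono_set_mult[OF order.refl \<open>K \<subseteq> H\<close>] subgroup_mult_id[OF \<open>subgroup H G\<close>] by blast
  show "H \<subseteq> H <#> K"
    using assms subgroup.mem_carrier by (force simp: set_mult_def)
qed

lemma set_mult_image_r_coset:
  assumes "group_hom G G' f" "subgroup B G" "subgroup B' G'" "f ` B \<subseteq> B'" "z \<in> carrier G"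
  shows "B' <#>\<^bsub>G'\<^esub> f ` (B #>\<^bsub>G\<^esub> z) = B' #>\<^bsub>G'\<^esub> f z"
proof -
  interpret group_hom G G' f by fact
  have "f ` (B #>\<^bsub>G\<^esub> z) = f ` B #>\<^bsub>G'\<^esub> f z"
    using coset_hom(2)[OF homh subgroup.subset] assms by blast
  moreover have "B' <#>\<^bsub>G'\<^esub> f ` B = B'"
    using H.subgroup_set_mult_absorb[OF \<open>subgroup B' G'\<close> _ \<open>f ` B \<subseteq> B'\<close>]
      subgroup.one_closed[OF \<open>subgroup B G\<close>] by (metis hom_one image_eqI)
  moreover have "f ` B \<subseteq> carrier G'"
    using \<open>f ` B \<subseteq> B'\<close> subgroup.subset[OF \<open>subgroup B' G'\<close>] by blast
  ultimately show ?thesis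
    using H.setmult_rcos_assoc[OF subgroup.subset[OF \<open>subgroup B' G'\<close>]] \<open>z \<in> carrier G\<close> by simp
qed

lemma (in group) r_coset_eq_self_iff:
  assumes "subgroup H G" "x \<in> carrier G"
  shows "H #> x = H \<longleftrightarrow> x \<in> H"
  using assms coset_join2 rcos_self by metis

lemma r_coset_subgroup_generated [simp]: "r_coset (subgroup_generated G Z) = r_coset G"
  by (simp add: r_coset_def fun_eq_iff subgroup_generated_def)

lemma set_mult_subgroup_generated [simp]: "set_mult (subgroup_generated G Z) = set_mult G"
  by (simp add: set_mult_def fun_eq_iff subgroup_generated_def)

lemma carrier_quotient:
  "subgroup Z G \<Longrightarrow> carrier (subgroup_generated G Z Mod B) = (\<lambda>z. B #>\<^bsub>G\<^esub> z) ` Z"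
  by (simp add: carrier_FactGroup subgroup.carrier_subgroup_generated_subgroup)

lemma (in comm_group) quotient_comm_group:
  assumes "subgroup Z G" "subgroup B G" "B \<subseteq> Z"
  shows "comm_group (subgroup_generated G Z Mod B)"
proof -
  have "subgroup B (subgroup_generated G Z)"
    using assms by (simp add: subgroup_subgroup_generated_iff subgroup.carrier_subgroup_generated_subgroup)
  then show ?thesis
    by (simp add: comm_group.abelian_FactGroup abelian_subgroup_generated comm_group_axioms)
qed

context
  fixes G :: "('a, 'm) monoid_scheme" and G' :: "('b, 'n) monoid_scheme" and f :: "'a \<Rightarrow> 'b"
    and Z B :: "'a set" and Z' B' :: "'b set"
  assumes G: "comm_group G" and G': "comm_group G'" and f: "f \<in> hom G G'"
    and Z: "subgroup Z G" and B: "subgroup B G" and BZ: "B \<subseteq> Z"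
    and Z': "subgroup Z' G'" and B': "subgroup B' G'" and BZ': "B' \<subseteq> Z'"
    and fZ: "f ` Z \<subseteq> Z'" and fB: "f ` B \<subseteq> B'"
begin

interpretation G: comm_group G by (fact G)
interpretation G': comm_group G' by (fact G')
interpretation group_hom G G' f
  using f by (simp add: group_hom_def group_hom_axioms_def G.is_group G'.is_group)

lemma quotient_map_r_coset: "z \<in> Z \<Longrightarrow> B' <#>\<^bsub>G'\<^esub> f ` (B #>\<^bsub>G\<^esub> z) = B' #>\<^bsub>G'\<^esub> f z"
  using set_mult_image_r_coset[OF group_hom_axioms B B' fB] subgroup.mem_carrier[OF Z] by blast

lemma quotient_map_hom:
  "(\<lambda>S. B' <#>\<^bsub>G'\<^esub> f ` S) \<in> hom (subgroup_generated G Z Mod B) (subgroup_generated G' Z' Mod B')"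
proof (rule homI)
  fix S assume "S \<in> carrier (subgroup_generated G Z Mod B)"
  then obtain z where "z \<in> Z" "S = B #>\<^bsub>G\<^esub> z"
    by (auto simp: carrier_quotient[OF Z])
  then show "B' <#>\<^bsub>G'\<^esub> f ` S \<in> carrier (subgroup_generated G' Z' Mod B')"
    using quotient_map_r_coset fZ by (auto simp: carrier_quotient[OF Z'])
next
  fix S T
  assume "S \<in> carrier (subgroup_generated G Z Mod B)" "T \<in> carrier (subgroup_generated G Z Mod B)"
  then obtain x y where xy: "x \<in> Z" "y \<in> Z" and S: "S = B #>\<^bsub>G\<^esub> x" and T: "T = B #>\<^bsub>G\<^esub> y"
    by (auto simp: carrier_quotient[OF Z])
  have carrier: "x \<in> carrier G" "y \<in> carrier G" "f x \<in> carrier G'" "f y \<in> carrier G'"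
    using xy subgroup.mem_carrier[OF Z] by auto
  show "B' <#>\<^bsub>G'\<^esub> f ` (S \<otimes>\<^bsub>subgroup_generated G Z Mod B\<^esub> T)
      = (B' <#>\<^bsub>G'\<^esub> f ` S) \<otimes>\<^bsub>subgroup_generated G' Z' Mod B'\<^esub> (B' <#>\<^bsub>G'\<^esub> f ` T)"
    using xy carrier subgroup.m_closed[OF Z]
    by (simp add: S T normal.rcos_sum[OF G.subgroup_imp_normal[OF B]]
        normal.rcos_sum[OF G'.subgroup_imp_normal[OF B']] quotient_map_r_coset)
qed

lemma quotient_map_iso:
  assumes inj: "\<And>z. z \<in> Z \<Longrightarrow> f z \<in> B' \<Longrightarrow> z \<in> B" and surj: "Z' \<subseteq> B' <#>\<^bsub>G'\<^esub> f ` Z"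
  shows "(\<lambda>S. B' <#>\<^bsub>G'\<^esub> f ` S) \<in> iso (subgroup_generated G Z Mod B) (subgroup_generated G' Z' Mod B')"
proof -
  interpret Q: group_hom "subgroup_generated G Z Mod B" "subgroup_generated G' Z' Mod B'"
    "\<lambda>S. B' <#>\<^bsub>G'\<^esub> f ` S"
    using quotient_map_hom G.quotient_comm_group[OF Z B BZ] G'.quotient_comm_group[OF Z' B' BZ']
    by (simp add: group_hom_def group_hom_axioms_def comm_group.axioms(2))
  show ?thesis
    unfolding Q.iso_iff
  proof (intro conjI ballI impI subsetI)
    fix S assume "S \<in> carrier (subgroup_generated G Z Mod B)"
      and "B' <#>\<^bsub>G'\<^esub> f ` S = \<one>\<^bsub>subgroup_generated G' Z' Mod B'\<^esub>"
    then obtain z where z: "z \<in> Z" "S = B #>\<^bsub>G\<^esub> z" and "B' #>\<^bsub>G'\<^esub> f z = B'"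
      using quotient_map_r_coset by (auto simp: carrier_quotient[OF Z])
    then have "f z \<in> B'"
      using G'.r_coset_eq_self_iff[OF B'] subgroup.mem_carrier[OF Z] by auto
    then show "S = \<one>\<^bsub>subgroup_generated G Z Mod B\<^esub>"
      using z inj G.r_coset_eq_self_iff[OF B] subgroup.mem_carrier[OF Z] by auto
  next
    fix V assume "V \<in> carrier (subgroup_generated G' Z' Mod B')"
    then obtain z' where z': "z' \<in> Z'" "V = B' #>\<^bsub>G'\<^esub> z'"
      by (auto simp: carrier_quotient[OF Z'])
    then obtain b' z where "b' \<in> B'" "z \<in> Z" "z' = b' \<otimes>\<^bsub>G'\<^esub> f z"
      using surj by (auto simp: set_mult_def)
    then have "V = B' <#>\<^bsub>G'\<^esub> f ` (B #>\<^bsub>G\<^esub> z)" "B #>\<^bsub>G\<^esub> z \<in> carrier (subgroup_generated G Z Mod B)"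
      using z' quotient_map_r_coset G'.rcos_eq_iff_mem[OF B'] subgroup.mem_carrier[OF Z] subgroup.mem_carrier[OF Z']
      by (auto simp: carrier_quotient[OF Z] r_coset_def)
    then show "V \<in> (\<lambda>S. B' <#>\<^bsub>G'\<^esub> f ` S) ` carrier (subgroup_generated G Z Mod B)"
      by blast
  qed
qed

end

lemma (in group_hom) subgroup_Int_vimage:
  assumes "subgroup A G" "subgroup B H"
  shows "subgroup (A \<inter> h -` B) G"
proof (rule G.subgroupI)
  show "A \<inter> h -` B \<subseteq> carrier G" using subgroup.subset[OF \<open>subgroup A G\<close>] by blast
  have "\<one> \<in> A \<inter> h -` B" using assms by (simp add: subgroup.one_closed)
  then show "A \<inter> h -` B \<noteq> {}" by blast
next
  fix a b assume a: "a \<in> A \<inter> h -` B" and b: "b \<in> A \<inter> h -` B"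
  have "a \<in> carrier G" "b \<in> carrier G"
    using a b subgroup.mem_carrier[OF \<open>subgroup A G\<close>] by auto
  then show "inv a \<in> A \<inter> h -` B" "a \<otimes> b \<in> A \<inter> h -` B"
    using a b assms by (simp_all add: subgroup.m_inv_closed subgroup.m_closed)
qed

locale chain_cx =
  fixes C :: "nat \<Rightarrow> ('a, 'm) monoid_scheme" and d :: "nat \<Rightarrow> 'a \<Rightarrow> 'a"
  assumes chain_complex: "chain_complex C d"
begin

lemma comm_group: "comm_group (C n)"
  using chain_complex by (simp add: chain_complex_def)

lemma group: "group (C n)"
  using comm_group comm_group.axioms(2) by blast

lemma group_hom_d: "group_hom (C (Suc n)) (C n) (d n)"
  using chain_complex group by (simp add: chain_complex_def group_hom_def group_hom_axioms_def)

lemma d_d: "x \<in> carrier (C (Suc (Suc n))) \<Longrightarrow> d n (d (Suc n) x) = \<one>\<^bsub>C n\<^esub>"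
  using chain_complex by (simp add: chain_complex_def)

lemma d_closed: "x \<in> carrier (C (Suc n)) \<Longrightarrow> d n x \<in> carrier (C n)"
  using group_hom.hom_closed[OF group_hom_d] .

lemma d_mult:
  "x \<in> carrier (C (Suc n)) \<Longrightarrow> y \<in> carrier (C (Suc n)) \<Longrightarrow>
   d n (x \<otimes>\<^bsub>C (Suc n)\<^esub> y) = d n x \<otimes>\<^bsub>C n\<^esub> d n y"
  using group_hom.hom_mult[OF group_hom_d] .

lemma d_one: "d n \<one>\<^bsub>C (Suc n)\<^esub> = \<one>\<^bsub>C n\<^esub>"
  using group_hom.hom_one[OF group_hom_d] .

definition subcomplex :: "(nat \<Rightarrow> 'a set) \<Rightarrow> bool" where
  "subcomplex A \<longleftrightarrow> (\<forall>n. subgroup (A n) (C n)) \<and> (\<forall>n. d n ` A (Suc n) \<subseteq> A n)"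

definition rel_cycles :: "(nat \<Rightarrow> 'a set) \<Rightarrow> (nat \<Rightarrow> 'a set) \<Rightarrow> nat \<Rightarrow> 'a set" where
  "rel_cycles A B n = (if n = 0 then A 0 else A n \<inter> d (n - 1) -` B (n - 1))"

lemma rel_cycles_0 [simp]: "rel_cycles A B 0 = A 0"
  by (simp add: rel_cycles_def)

lemma rel_cycles_Suc [simp]: "rel_cycles A B (Suc n) = {a \<in> A (Suc n). d n a \<in> B n}"
  by (auto simp add: rel_cycles_def)

lemma rel_cycles_subset: "rel_cycles A B n \<subseteq> A n"
  by (cases n) auto

lemma rel_cycles_mono:
  "(\<And>n. A n \<subseteq> A' n) \<Longrightarrow> (\<And>n. B n \<subseteq> B' n) \<Longrightarrow> rel_cycles A B n \<subseteq> rel_cycles A' B' n"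
  by (cases n) auto

lemma subgroup_rel_cycles:
  assumes "\<And>n. subgroup (A n) (C n)" "\<And>n. subgroup (B n) (C n)"
  shows "subgroup (rel_cycles A B n) (C n)"
  using assms group_hom.subgroup_Int_vimage[OF group_hom_d] by (cases n) (auto simp: rel_cycles_def)

lemma Inf_cx_eq_rel_cycles: "Inf_cx C d D = rel_cycles D D"
  by (simp add: fun_eq_iff Inf_cx_def rel_cycles_def)

lemma mem_Sup_cx: "x \<in> Sup_cx C d D n \<longleftrightarrow> (\<exists>a\<in>D n. \<exists>b\<in>D (Suc n). x = a \<otimes>\<^bsub>C n\<^esub> d n b)"
  by (auto simp add: Sup_cx_def set_mult_def)

lemma Inf_cx_subset: "Inf_cx C d D n \<subseteq> D n"
  using rel_cycles_subset by (simp add: Inf_cx_eq_rel_cycles)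

lemma Inf_cx_mono: "(\<And>n. D' n \<subseteq> D n) \<Longrightarrow> Inf_cx C d D' n \<subseteq> Inf_cx C d D n"
  by (cases n) (auto simp: Inf_cx_eq_rel_cycles)

lemma Sup_cx_mono: "(\<And>n. D' n \<subseteq> D n) \<Longrightarrow> Sup_cx C d D' n \<subseteq> Sup_cx C d D n"
  unfolding Sup_cx_def by (intro mono_set_mult image_mono) auto

lemma subset_Sup_cx:
  assumes "\<And>n. subgroup (D n) (C n)"
  shows "D n \<subseteq> Sup_cx C d D n"
proof
  fix x assume "x \<in> D n"
  moreover have "x = x \<otimes>\<^bsub>C n\<^esub> d n \<one>\<^bsub>C (Suc n)\<^esub>"
    using \<open>x \<in> D n\<close> subgroup.mem_carrier[OF assms] group by (simp add: d_one group.is_monoid)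
  ultimately show "x \<in> Sup_cx C d D n"
    using subgroup.one_closed[OF assms] by (auto simp: mem_Sup_cx)
qed

lemma Inf_cx_subset_Sup_cx:
  "(\<And>n. subgroup (D n) (C n)) \<Longrightarrow> Inf_cx C d D n \<subseteq> Sup_cx C d D n"
  using Inf_cx_subset subset_Sup_cx by blast

lemma subcomplex_Inf_cx:
  assumes D: "\<And>n. subgroup (D n) (C n)"
  shows "subcomplex (Inf_cx C d D)"
  unfolding subcomplex_def Inf_cx_eq_rel_cycles
proof (intro conjI allI subsetI)
  show "subgroup (rel_cycles D D n) (C n)" for n using subgroup_rel_cycles D by blast
  fix n y assume "y \<in> d n ` rel_cycles D D (Suc n)"
  then obtain x where x: "x \<in> D (Suc n)" "d n x \<in> D n" and y: "y = d n x" by auto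
  show "y \<in> rel_cycles D D n"
  proof (cases n)
    case (Suc m)
    then have "d m y = \<one>\<^bsub>C m\<^esub>" using x y d_d subgroup.mem_carrier[OF D] by blast
    then show ?thesis using Suc x y subgroup.one_closed[OF D] by simp
  qed (use x y in simp)
qed

lemma subcomplex_Sup_cx:
  assumes D: "\<And>n. subgroup (D n) (C n)"
  shows "subcomplex (Sup_cx C d D)"
  unfolding subcomplex_def
proof (intro conjI allI subsetI)
  show "subgroup (Sup_cx C d D n) (C n)" for n
    unfolding Sup_cx_def
    using comm_group.mult_subgroups[OF comm_group D] group_hom.subgroup_img_is_subgroup[OF group_hom_d D]
    by blast
  fix n y assume "y \<in> d n ` Sup_cx C d D (Suc n)"
  then obtain a b where a: "a \<in> D (Suc n)" and b: "b \<in> D (Suc (Suc n))"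
    and y: "y = d n (a \<otimes>\<^bsub>C (Suc n)\<^esub> d (Suc n) b)"
    by (auto simp: mem_Sup_cx)
  have "a \<in> carrier (C (Suc n))" "b \<in> carrier (C (Suc (Suc n)))"
    using a b subgroup.mem_carrier[OF D] by auto
  then have "y = \<one>\<^bsub>C n\<^esub> \<otimes>\<^bsub>C n\<^esub> d n a"
    using y group by (simp add: d_mult d_closed d_d group.is_monoid)
  then show "y \<in> Sup_cx C d D n"
    using a subgroup.one_closed[OF D] by (auto simp: mem_Sup_cx)
qed

end

locale quotient_cx = chain_cx +
  fixes A B :: "nat \<Rightarrow> 'a set"
  assumes subcomplex_A: "subcomplex A" and subcomplex_B: "subcomplex B"
    and B_subset_A: "\<And>n. B n \<subseteq> A n"
begin

abbreviation Q :: "nat \<Rightarrow> 'a set monoid" where "Q \<equiv> quot_cx C A B"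
abbreviation \<delta> :: "nat \<Rightarrow> 'a set \<Rightarrow> 'a set" where "\<delta> \<equiv> quot_bd C d B"

lemma subgroup_A: "subgroup (A n) (C n)" and subgroup_B: "subgroup (B n) (C n)"
  and d_A: "d n ` A (Suc n) \<subseteq> A n" and d_B: "d n ` B (Suc n) \<subseteq> B n"
  using subcomplex_A subcomplex_B by (auto simp: subcomplex_def)

lemma A_carrier: "a \<in> A n \<Longrightarrow> a \<in> carrier (C n)"
  using subgroup.mem_carrier[OF subgroup_A] .

lemma carrier_Q: "carrier (Q n) = (\<lambda>a. B n #>\<^bsub>C n\<^esub> a) ` A n"
  unfolding quot_cx_def using carrier_quotient[OF subgroup_A] .

lemma comm_group_Q: "comm_group (Q n)"
  unfolding quot_cx_def using comm_group.quotient_comm_group[OF comm_group subgroup_A subgroup_B B_subset_A] .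

lemma group_Q: "group (Q n)"
  using comm_group_Q comm_group.axioms(2) by blast

lemma r_coset_mult_Q:
  assumes "a \<in> carrier (C n)" "b \<in> carrier (C n)"
  shows "(B n #>\<^bsub>C n\<^esub> a) \<otimes>\<^bsub>Q n\<^esub> (B n #>\<^bsub>C n\<^esub> b) = B n #>\<^bsub>C n\<^esub> (a \<otimes>\<^bsub>C n\<^esub> b)"
  using normal.rcos_sum[OF comm_group.subgroup_imp_normal[OF comm_group subgroup_B]] assms
  by (simp add: quot_cx_def)

lemma \<delta>_eq: "\<delta> n = (\<lambda>S. B n <#>\<^bsub>C n\<^esub> d n ` S)"
  by (simp add: fun_eq_iff quot_bd_def)

lemma \<delta>_hom: "\<delta> n \<in> hom (Q (Suc n)) (Q n)"
  unfolding \<delta>_eq quot_cx_def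
  using quotient_map_hom[OF comm_group comm_group group_hom.homh[OF group_hom_d]
      subgroup_A subgroup_B B_subset_A subgroup_A subgroup_B B_subset_A d_A d_B] .

lemma \<delta>_r_coset: "a \<in> A (Suc n) \<Longrightarrow> \<delta> n (B (Suc n) #>\<^bsub>C (Suc n)\<^esub> a) = B n #>\<^bsub>C n\<^esub> d n a"
  unfolding \<delta>_eq
  using quotient_map_r_coset[OF comm_group comm_group group_hom.homh[OF group_hom_d]
      subgroup_A subgroup_B B_subset_A subgroup_A subgroup_B B_subset_A d_A d_B] .

lemma r_coset_B_eq_iff: "a \<in> carrier (C n) \<Longrightarrow> B n #>\<^bsub>C n\<^esub> a = B n \<longleftrightarrow> a \<in> B n"
  using group.r_coset_eq_self_iff[OF group subgroup_B] .

lemma cycles_Q: "cycles Q \<delta> n = (\<lambda>a. B n #>\<^bsub>C n\<^esub> a) ` rel_cycles A B n"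
proof (cases n)
  case 0 then show ?thesis by (simp add: cycles_def carrier_Q)
next
  case (Suc m)
  have "\<delta> m (B (Suc m) #>\<^bsub>C (Suc m)\<^esub> a) = \<one>\<^bsub>Q m\<^esub> \<longleftrightarrow> d m a \<in> B m" if "a \<in> A (Suc m)" for a
    using that \<delta>_r_coset r_coset_B_eq_iff d_closed A_carrier by (simp add: quot_cx_def)
  then show ?thesis
    using Suc by (auto simp: cycles_def kernel_def carrier_Q)
qed

lemma boundaries_Q: "boundaries Q \<delta> n = (\<lambda>b. B n #>\<^bsub>C n\<^esub> d n b) ` A (Suc n)"
  unfolding boundaries_def carrier_Q image_image using \<delta>_r_coset by simp

lemma r_coset_mem_boundaries_iff:
  assumes "a \<in> carrier (C n)"
  shows "B n #>\<^bsub>C n\<^esub> a \<in> boundaries Q \<delta> n \<longleftrightarrow> a \<in> B n <#>\<^bsub>C n\<^esub> d n ` A (Suc n)"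
proof -
  have "B n #>\<^bsub>C n\<^esub> a = B n #>\<^bsub>C n\<^esub> d n b \<longleftrightarrow> a \<in> B n #>\<^bsub>C n\<^esub> d n b" if "b \<in> A (Suc n)" for b
    using group.rcos_eq_iff_mem[OF group subgroup_B assms d_closed[OF A_carrier[OF that]]] .
  then have "B n #>\<^bsub>C n\<^esub> a \<in> boundaries Q \<delta> n \<longleftrightarrow> (\<exists>b\<in>A (Suc n). a \<in> B n #>\<^bsub>C n\<^esub> d n b)"
    by (simp add: boundaries_Q image_iff)
  also have "\<dots> \<longleftrightarrow> a \<in> B n <#>\<^bsub>C n\<^esub> d n ` A (Suc n)"
    by (auto simp: r_coset_def set_mult_def)
  finally show ?thesis .
qed

lemma group_hom_\<delta>: "group_hom (Q (Suc n)) (Q n) (\<delta> n)"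
  by (simp add: group_hom_def group_hom_axioms_def group_Q \<delta>_hom)

lemma subgroup_cycles: "subgroup (cycles Q \<delta> n) (Q n)"
proof (cases n)
  case 0 then show ?thesis by (simp add: cycles_def group.subgroup_self[OF group_Q])
next
  case (Suc m) then show ?thesis
    using group_hom.subgroup_kernel[OF group_hom_\<delta>] by (simp add: cycles_def)
qed

lemma subgroup_boundaries: "subgroup (boundaries Q \<delta> n) (Q n)"
  unfolding boundaries_def using group_hom.img_is_subgroup[OF group_hom_\<delta>] .

lemma boundaries_subset_cycles: "boundaries Q \<delta> n \<subseteq> cycles Q \<delta> n"
proof -
  have "d n b \<in> rel_cycles A B n" if "b \<in> A (Suc n)" for b
  proof (cases n)
    case (Suc m)
    then have "d m (d n b) = \<one>\<^bsub>C m\<^esub>" using d_d A_carrier that by blast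
    then show ?thesis using Suc d_A that subgroup.one_closed[OF subgroup_B] by auto
  qed (use d_A that in auto)
  then show ?thesis by (auto simp: boundaries_Q cycles_Q)
qed

end

locale nested_graded_subgroups = chain_cx +
  fixes D D' :: "nat \<Rightarrow> 'a set"
  assumes subgroup_D: "\<And>n. subgroup (D n) (C n)" and subgroup_D': "\<And>n. subgroup (D' n) (C n)"
    and D'_subset_D: "\<And>n. D' n \<subseteq> D n"
begin

sublocale Inf: quotient_cx C d "Inf_cx C d D" "Inf_cx C d D'"
  by unfold_locales (simp_all add: subcomplex_Inf_cx subgroup_D subgroup_D' Inf_cx_mono D'_subset_D)

sublocale Sup: quotient_cx C d "Sup_cx C d D" "Sup_cx C d D'"
  by unfold_locales (simp_all add: subcomplex_Sup_cx subgroup_D subgroup_D' Sup_cx_mono D'_subset_D)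

lemma D_carrier: "x \<in> D n \<Longrightarrow> x \<in> carrier (C n)" and D'_carrier: "x \<in> D' n \<Longrightarrow> x \<in> carrier (C n)"
  using subgroup.mem_carrier[OF subgroup_D] subgroup.mem_carrier[OF subgroup_D'] by auto

lemma Sup_cx_boundary_reps:
  "Sup_cx C d D' n <#>\<^bsub>C n\<^esub> d n ` Sup_cx C d D (Suc n) = D' n <#>\<^bsub>C n\<^esub> d n ` D (Suc n)"
proof
  show "D' n <#>\<^bsub>C n\<^esub> d n ` D (Suc n) \<subseteq> Sup_cx C d D' n <#>\<^bsub>C n\<^esub> d n ` Sup_cx C d D (Suc n)"
    using subset_Sup_cx subgroup_D subgroup_D' by (intro mono_set_mult image_mono) auto
next
  interpret Cn: comm_group "C n" by (rule comm_group)
  show "Sup_cx C d D' n <#>\<^bsub>C n\<^esub> d n ` Sup_cx C d D (Suc n) \<subseteq> D' n <#>\<^bsub>C n\<^esub> d n ` D (Suc n)"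
  proof
    fix x assume "x \<in> Sup_cx C d D' n <#>\<^bsub>C n\<^esub> d n ` Sup_cx C d D (Suc n)"
    then obtain u v a b where uv: "u \<in> D' n" "v \<in> D' (Suc n)" and ab: "a \<in> D (Suc n)" "b \<in> D (Suc (Suc n))"
      and x: "x = (u \<otimes>\<^bsub>C n\<^esub> d n v) \<otimes>\<^bsub>C n\<^esub> d n (a \<otimes>\<^bsub>C (Suc n)\<^esub> d (Suc n) b)"
      by (auto simp: set_mult_def mem_Sup_cx)
    have "x = u \<otimes>\<^bsub>C n\<^esub> d n (v \<otimes>\<^bsub>C (Suc n)\<^esub> a)"
      using uv ab by (simp add: x d_mult d_closed d_d D_carrier D'_carrier Cn.m_assoc)
    moreover have "v \<otimes>\<^bsub>C (Suc n)\<^esub> a \<in> D (Suc n)"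
      using uv ab D'_subset_D subgroup.m_closed[OF subgroup_D] by blast
    ultimately show "x \<in> D' n <#>\<^bsub>C n\<^esub> d n ` D (Suc n)"
      using uv by (auto simp: set_mult_def)
  qed
qed

lemma Inf_rel_cycle_bounds:
  assumes a: "a \<in> rel_cycles (Inf_cx C d D) (Inf_cx C d D') n"
    and "a \<in> D' n <#>\<^bsub>C n\<^esub> d n ` D (Suc n)"
  shows "a \<in> Inf_cx C d D' n <#>\<^bsub>C n\<^esub> d n ` Inf_cx C d D (Suc n)"
proof -
  interpret Cn: comm_group "C n" by (rule comm_group)
  obtain u w where u: "u \<in> D' n" and w: "w \<in> D (Suc n)" and a_eq: "a = u \<otimes>\<^bsub>C n\<^esub> d n w"
    using assms(2) by (auto simp: set_mult_def)
  have a_Inf: "a \<in> Inf_cx C d D n"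
    using a rel_cycles_subset by blast
  then have "a \<in> D n"
    using Inf_cx_subset by blast
  have carrier: "u \<in> carrier (C n)" "w \<in> carrier (C (Suc n))" "a \<in> carrier (C n)"
    using u w \<open>a \<in> D n\<close> D_carrier D'_carrier by auto
  have "d n w = inv\<^bsub>C n\<^esub> u \<otimes>\<^bsub>C n\<^esub> a"
    using a_eq carrier Cn.inv_solve_left d_closed by blast
  moreover have "u \<in> D n"
    using u D'_subset_D by blast
  ultimately have "d n w \<in> D n"
    using \<open>a \<in> D n\<close> subgroup.m_closed[OF subgroup_D subgroup.m_inv_closed[OF subgroup_D]] by simp
  then have w_Inf: "w \<in> Inf_cx C d D (Suc n)"
    using w by (simp add: Inf_cx_eq_rel_cycles)
  have u_Inf: "u \<in> Inf_cx C d D' n"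
  proof (cases n)
    case (Suc m)
    have "d m a = d m u"
      using carrier Suc group by (simp add: a_eq d_mult d_closed d_d group.is_monoid)
    moreover have "d m a \<in> D' m"
      using a Suc Inf_cx_subset by (auto simp: Inf_cx_eq_rel_cycles)
    ultimately show ?thesis
      using u Suc by (simp add: Inf_cx_eq_rel_cycles)
  qed (use u in \<open>simp add: Inf_cx_eq_rel_cycles\<close>)
  show ?thesis
    using a_eq u_Inf w_Inf by (auto simp: set_mult_def)
qed

lemma Sup_rel_cycle_decomp:
  assumes s: "s \<in> rel_cycles (Sup_cx C d D) (Sup_cx C d D') n"
  obtains r t where "r \<in> D' n <#>\<^bsub>C n\<^esub> d n ` D (Suc n)"
    and "t \<in> rel_cycles (Inf_cx C d D) (Inf_cx C d D') n" and "s = r \<otimes>\<^bsub>C n\<^esub> t"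
proof -
  interpret Cn: comm_group "C n" by (rule comm_group)
  obtain x y where x: "x \<in> D n" and y: "y \<in> D (Suc n)" and s_eq: "s = x \<otimes>\<^bsub>C n\<^esub> d n y"
    using s rel_cycles_subset mem_Sup_cx by blast
  have "\<exists>v\<in>D' n. \<exists>t\<in>rel_cycles (Inf_cx C d D) (Inf_cx C d D') n. x = v \<otimes>\<^bsub>C n\<^esub> t"
  proof (cases n)
    case 0
    have "x = \<one>\<^bsub>C n\<^esub> \<otimes>\<^bsub>C n\<^esub> x"
      using x D_carrier by simp
    then show ?thesis
      using 0 x subgroup.one_closed[OF subgroup_D']
      by (intro bexI[of _ "\<one>\<^bsub>C n\<^esub>"] bexI[of _ x]) (auto simp: Inf_cx_eq_rel_cycles)
  next
    case (Suc m)
    interpret Cm: comm_group "C m" by (rule comm_group)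
    interpret CSm: comm_group "C (Suc m)" by (rule comm_group)
    have carrier: "x \<in> carrier (C (Suc m))" "y \<in> carrier (C (Suc (Suc m)))"
      using x y Suc D_carrier by auto
    have "d m s = d m x"
      using carrier Suc by (simp add: s_eq d_mult d_closed d_d)
    moreover have "d m s \<in> Sup_cx C d D' m"
      using s Suc by simp
    ultimately obtain u v where u: "u \<in> D' m" and v: "v \<in> D' (Suc m)"
      and dx: "d m x = u \<otimes>\<^bsub>C m\<^esub> d m v"
      by (auto simp: mem_Sup_cx)
    define t where "t = inv\<^bsub>C (Suc m)\<^esub> v \<otimes>\<^bsub>C (Suc m)\<^esub> x"
    have v_carrier: "v \<in> carrier (C (Suc m))" using v D'_carrier by blast
    have t_carrier: "t \<in> carrier (C (Suc m))" and x_eq: "x = v \<otimes>\<^bsub>C (Suc m)\<^esub> t"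
      using carrier v_carrier by (simp_all add: t_def CSm.m_assoc[symmetric])
    have "d m v \<otimes>\<^bsub>C m\<^esub> d m t = d m v \<otimes>\<^bsub>C m\<^esub> u"
      using dx u D'_carrier d_closed v_carrier t_carrier
      by (simp add: x_eq d_mult Cm.m_comm)
    then have dt: "d m t = u"
      using u D'_carrier d_closed v_carrier t_carrier by simp
    have "v \<in> D (Suc m)"
      using v D'_subset_D by blast
    then have "t \<in> D (Suc m)"
      using x Suc subgroup.m_closed[OF subgroup_D subgroup.m_inv_closed[OF subgroup_D]] by (simp add: t_def)
    moreover have "u \<in> Inf_cx C d D' m"
    proof (cases m)
      case (Suc k)
      have "d k u = \<one>\<^bsub>C k\<^esub>"
        using dt d_d t_carrier Suc by blast
      then show ?thesis
        using u Suc subgroup.one_closed[OF subgroup_D'] by (simp add: Inf_cx_eq_rel_cycles)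
    qed (use u in \<open>simp add: Inf_cx_eq_rel_cycles\<close>)
    ultimately have "t \<in> rel_cycles (Inf_cx C d D) (Inf_cx C d D') n"
      using dt u D'_subset_D Suc by (auto simp: Inf_cx_eq_rel_cycles)
    then show ?thesis
      using x_eq v Suc by auto
  qed
  then obtain v t where v: "v \<in> D' n" and t: "t \<in> rel_cycles (Inf_cx C d D) (Inf_cx C d D') n"
    and x_eq: "x = v \<otimes>\<^bsub>C n\<^esub> t"
    by blast
  have "t \<in> carrier (C n)"
    using t rel_cycles_subset Inf.A_carrier by blast
  then have "s = (v \<otimes>\<^bsub>C n\<^esub> d n y) \<otimes>\<^bsub>C n\<^esub> t"
    using v y D_carrier D'_carrier d_closed by (simp add: s_eq x_eq Cn.m_ac)
  moreover have "v \<otimes>\<^bsub>C n\<^esub> d n y \<in> D' n <#>\<^bsub>C n\<^esub> d n ` D (Suc n)"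
    using v y by (auto simp: set_mult_def)
  ultimately show thesis
    using that t by blast
qed

abbreviation \<iota> :: "nat \<Rightarrow> 'a set \<Rightarrow> 'a set" where
  "\<iota> \<equiv> \<lambda>n S. Sup_cx C d D' n <#>\<^bsub>C n\<^esub> S"

lemma Inf_D'_subset_Sup_D': "Inf_cx C d D' n \<subseteq> Sup_cx C d D' n"
  and Inf_D_subset_Sup_D: "Inf_cx C d D n \<subseteq> Sup_cx C d D n"
  using Inf_cx_subset_Sup_cx subgroup_D subgroup_D' by auto

lemma id_hom: "id \<in> hom (C n) (C n)"
  by (rule homI) auto

lemma \<iota>_hom: "\<iota> n \<in> hom (Inf.Q n) (Sup.Q n)"
  using quotient_map_hom[OF comm_group comm_group id_hom Inf.subgroup_A Inf.subgroup_B Inf.B_subset_A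
      Sup.subgroup_A Sup.subgroup_B Sup.B_subset_A] Inf_D'_subset_Sup_D' Inf_D_subset_Sup_D
  by (simp add: quot_cx_def)

lemma \<iota>_r_coset: "a \<in> Inf_cx C d D n \<Longrightarrow> \<iota> n (Inf_cx C d D' n #>\<^bsub>C n\<^esub> a) = Sup_cx C d D' n #>\<^bsub>C n\<^esub> a"
  using quotient_map_r_coset[OF comm_group comm_group id_hom Inf.subgroup_A Inf.subgroup_B Inf.B_subset_A
      Sup.subgroup_A Sup.subgroup_B Sup.B_subset_A] Inf_D'_subset_Sup_D' Inf_D_subset_Sup_D
  by simp

lemma chain_map_\<iota>: "chain_map Inf.Q Inf.\<delta> Sup.Q Sup.\<delta> \<iota>"
  unfolding chain_map_def
proof (intro conjI allI impI \<iota>_hom)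
  fix n U assume "U \<in> carrier (Inf.Q (Suc n))"
  then obtain a where a: "a \<in> Inf_cx C d D (Suc n)" and U: "U = Inf_cx C d D' (Suc n) #>\<^bsub>C (Suc n)\<^esub> a"
    by (auto simp: Inf.carrier_Q)
  moreover have "d n a \<in> Inf_cx C d D n" "a \<in> Sup_cx C d D (Suc n)"
    using a Inf.d_A Inf_D_subset_Sup_D by blast+
  ultimately show "\<iota> n (Inf.\<delta> n U) = Sup.\<delta> n (\<iota> (Suc n) U)"
    by (simp add: Inf.\<delta>_r_coset Sup.\<delta>_r_coset \<iota>_r_coset)
qed

lemma cycles_Inf_to_Sup: "\<iota> n ` cycles Inf.Q Inf.\<delta> n \<subseteq> cycles Sup.Q Sup.\<delta> n"
proof
  fix V assume "V \<in> \<iota> n ` cycles Inf.Q Inf.\<delta> n"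
  then obtain a where a: "a \<in> rel_cycles (Inf_cx C d D) (Inf_cx C d D') n"
    and "V = \<iota> n (Inf_cx C d D' n #>\<^bsub>C n\<^esub> a)"
    by (auto simp: Inf.cycles_Q)
  then have "V = Sup_cx C d D' n #>\<^bsub>C n\<^esub> a"
    using rel_cycles_subset by (simp add: \<iota>_r_coset subset_iff)
  moreover have "a \<in> rel_cycles (Sup_cx C d D) (Sup_cx C d D') n"
    using a rel_cycles_mono[of "Inf_cx C d D" "Sup_cx C d D" "Inf_cx C d D'" "Sup_cx C d D'"]
      Inf_D_subset_Sup_D Inf_D'_subset_Sup_D' by blast
  ultimately show "V \<in> cycles Sup.Q Sup.\<delta> n"
    by (simp add: Sup.cycles_Q)
qed

lemma boundaries_Inf_to_Sup: "\<iota> n ` boundaries Inf.Q Inf.\<delta> n \<subseteq> boundaries Sup.Q Sup.\<delta> n"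
proof
  fix V assume "V \<in> \<iota> n ` boundaries Inf.Q Inf.\<delta> n"
  then obtain b where b: "b \<in> Inf_cx C d D (Suc n)"
    and "V = \<iota> n (Inf_cx C d D' n #>\<^bsub>C n\<^esub> d n b)"
    by (auto simp: Inf.boundaries_Q)
  then have "V = Sup_cx C d D' n #>\<^bsub>C n\<^esub> d n b"
    using Inf.d_A by (simp add: \<iota>_r_coset image_subset_iff)
  moreover have "b \<in> Sup_cx C d D (Suc n)"
    using b Inf_D_subset_Sup_D by blast
  ultimately show "V \<in> boundaries Sup.Q Sup.\<delta> n"
    by (simp add: Sup.boundaries_Q)
qed

lemma \<iota>_reflects_boundaries:
  assumes U: "U \<in> cycles Inf.Q Inf.\<delta> n" and "\<iota> n U \<in> boundaries Sup.Q Sup.\<delta> n"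
  shows "U \<in> boundaries Inf.Q Inf.\<delta> n"
proof -
  obtain a where a: "a \<in> rel_cycles (Inf_cx C d D) (Inf_cx C d D') n"
    and U_eq: "U = Inf_cx C d D' n #>\<^bsub>C n\<^esub> a"
    using U by (auto simp: Inf.cycles_Q)
  have a_Inf: "a \<in> Inf_cx C d D n"
    using a rel_cycles_subset by blast
  then have "Sup_cx C d D' n #>\<^bsub>C n\<^esub> a \<in> boundaries Sup.Q Sup.\<delta> n"
    using assms(2) by (simp add: U_eq \<iota>_r_coset)
  then have "a \<in> D' n <#>\<^bsub>C n\<^esub> d n ` D (Suc n)"
    using a_Inf Inf.A_carrier by (simp add: Sup.r_coset_mem_boundaries_iff Sup_cx_boundary_reps)
  then show ?thesis
    using Inf_rel_cycle_bounds[OF a] a_Inf Inf.A_carrier by (simp add: U_eq Inf.r_coset_mem_boundaries_iff)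
qed

lemma cycles_Sup_represented:
  "cycles Sup.Q Sup.\<delta> n \<subseteq> boundaries Sup.Q Sup.\<delta> n <#>\<^bsub>Sup.Q n\<^esub> \<iota> n ` cycles Inf.Q Inf.\<delta> n"
proof
  fix V assume "V \<in> cycles Sup.Q Sup.\<delta> n"
  then obtain s where s: "s \<in> rel_cycles (Sup_cx C d D) (Sup_cx C d D') n"
    and V_eq: "V = Sup_cx C d D' n #>\<^bsub>C n\<^esub> s"
    by (auto simp: Sup.cycles_Q)
  obtain r t where r: "r \<in> D' n <#>\<^bsub>C n\<^esub> d n ` D (Suc n)"
    and t: "t \<in> rel_cycles (Inf_cx C d D) (Inf_cx C d D') n" and s_eq: "s = r \<otimes>\<^bsub>C n\<^esub> t"
    using Sup_rel_cycle_decomp[OF s] .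
  have t_Inf: "t \<in> Inf_cx C d D n"
    using t rel_cycles_subset by blast
  interpret Cn: comm_group "C n" by (rule comm_group)
  have r_carrier: "r \<in> carrier (C n)"
    using r D_carrier D'_carrier d_closed by (auto simp: set_mult_def)
  have "Sup_cx C d D' n #>\<^bsub>C n\<^esub> r \<in> boundaries Sup.Q Sup.\<delta> n"
    using r r_carrier by (simp add: Sup.r_coset_mem_boundaries_iff Sup_cx_boundary_reps)
  moreover have "\<iota> n (Inf_cx C d D' n #>\<^bsub>C n\<^esub> t) \<in> \<iota> n ` cycles Inf.Q Inf.\<delta> n"
    using t by (auto simp: Inf.cycles_Q)
  moreover have "V = (Sup_cx C d D' n #>\<^bsub>C n\<^esub> r) \<otimes>\<^bsub>Sup.Q n\<^esub> \<iota> n (Inf_cx C d D' n #>\<^bsub>C n\<^esub> t)"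
    using r_carrier t_Inf Inf.A_carrier by (simp add: V_eq s_eq \<iota>_r_coset Sup.r_coset_mult_Q)
  ultimately show "V \<in> boundaries Sup.Q Sup.\<delta> n <#>\<^bsub>Sup.Q n\<^esub> \<iota> n ` cycles Inf.Q Inf.\<delta> n"
    unfolding set_mult_def by blast
qed

lemma homology_iso_\<iota>:
  "hom_induced Sup.Q Sup.\<delta> \<iota> n \<in> iso (homology Inf.Q Inf.\<delta> n) (homology Sup.Q Sup.\<delta> n)"
proof -
  have "hom_induced Sup.Q Sup.\<delta> \<iota> n = (\<lambda>U. boundaries Sup.Q Sup.\<delta> n <#>\<^bsub>Sup.Q n\<^esub> \<iota> n ` U)"
    by (simp add: hom_induced_def fun_eq_iff)
  then show ?thesis
    unfolding homology_def
    using quotient_map_iso[OF Inf.comm_group_Q Sup.comm_group_Q \<iota>_hom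
        Inf.subgroup_cycles Inf.subgroup_boundaries Inf.boundaries_subset_cycles
        Sup.subgroup_cycles Sup.subgroup_boundaries Sup.boundaries_subset_cycles
        cycles_Inf_to_Sup boundaries_Inf_to_Sup \<iota>_reflects_boundaries cycles_Sup_represented]
    by simp
qed

end

theorem lemma1p1:
  fixes C :: "nat \<Rightarrow> ('a, 'm) monoid_scheme" and d :: "nat \<Rightarrow> 'a \<Rightarrow> 'a"
    and D D' :: "nat \<Rightarrow> 'a set"
  assumes "chain_complex C d"
    and "\<And>n. subgroup (D n) (C n)"
    and "\<And>n. subgroup (D' n) (C n)"
    and "\<And>n. D' n \<subseteq> D n"
  defines "\<iota> \<equiv> (\<lambda>n S. Sup_cx C d D' n <#>\<^bsub>C n\<^esub> S)"
  shows "chain_map (quot_cx C (Inf_cx C d D) (Inf_cx C d D')) (quot_bd C d (Inf_cx C d D'))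
                   (quot_cx C (Sup_cx C d D) (Sup_cx C d D')) (quot_bd C d (Sup_cx C d D')) \<iota>
         \<and> (\<forall>n. hom_induced (quot_cx C (Sup_cx C d D) (Sup_cx C d D')) (quot_bd C d (Sup_cx C d D')) \<iota> n
                 \<in> iso (homology (quot_cx C (Inf_cx C d D) (Inf_cx C d D')) (quot_bd C d (Inf_cx C d D')) n)
                       (homology (quot_cx C (Sup_cx C d D) (Sup_cx C d D')) (quot_bd C d (Sup_cx C d D')) n))"
proof -
  interpret nested_graded_subgroups C d D D'
    using assms(1-4) by (simp add: nested_graded_subgroups_def nested_graded_subgroups_axioms_def chain_cx_def)
  show ?thesis
    unfolding \<iota>_def using chain_map_\<iota> homology_iso_\<iota> by blast
qed

end
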